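(* Let $G_1,\dots,G_n$ be rooted graphs and let $G$ be the decorated path obtained from them, with path vertices $1,\dots,n$. Assume that $\alpha_i^{G_i}=\alpha_{n+1-i}^{G_{n+1-i}}$ for all $i\in\{1,\dots,n\}$. Then $\alpha_1^G=\alpha_n^G$.
   Context: Graphs are finite and simple. For a graph $H$, $\phi^H$ is the characteristic polynomial of its adjacency matrix (variable $x$), and for a vertex $i$ of $H$, $\alpha_i^H=\phi^H/\phi^{H\setminus i}$ as a rational function. A rooted graph is a graph with a distinguished vertex (its root). The decorated path built from rooted graphs $G_1,\dots,G_n$ (pairwise disjoint) is obtained from the path on vertices $1,\dots,n$ (with $i\sim i+1$) by identifying the root of $G_i$ with vertex $i$. The root of $G_i$ is thus called $i$, and $\alpha_i^{G_i}$ is taken at that root. *)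

theory Defs
  imports "HOL-Computational_Algebra.Polynomial" "HOL-Computational_Algebra.Fraction_Field"
          "HOL-Combinatorics.Permutations"
begin

type_synonym 'a graph = "'a set \<times> 'a set set"

definition verts :: "'a graph \<Rightarrow> 'a set" where "verts G = fst G"
definition edges :: "'a graph \<Rightarrow> 'a set set" where "edges G = snd G"

definition simple_graph :: "'a graph \<Rightarrow> bool" where
  "simple_graph G \<longleftrightarrow> finite (verts G) \<and>
     (\<forall>e\<in>edges G. e \<subseteq> verts G \<and> card e = 2)"

definition adj :: "'a graph \<Rightarrow> 'a \<Rightarrow> 'a \<Rightarrow> int" where
  "adj G u v = (if {u, v} \<in> edges G then 1 else 0)"

text \<open>Characteristic polynomial det(x I - A) of the adjacency matrix A,
  written out via the Leibniz formula over permutations of the vertex set.\<close>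
definition charpoly :: "'a graph \<Rightarrow> int poly" where
  "charpoly G = (\<Sum>p | p permutes verts G. of_int (sign p) *
      (\<Prod>v\<in>verts G. (if p v = v then [:0, 1:] else 0) - [:adj G v (p v):]))"

definition delete_vertex :: "'a graph \<Rightarrow> 'a \<Rightarrow> 'a graph" where
  "delete_vertex G i = (verts G - {i}, {e \<in> edges G. i \<notin> e})"

definition alpha :: "'a graph \<Rightarrow> 'a \<Rightarrow> int poly fract" where
  "alpha H i = Fract (charpoly H) (charpoly (delete_vertex H i))"

text \<open>Decorated path: rooted graphs (Gs i, r i), i = 1..n, pairwise disjoint;
  path vertex i is identified with the root r i, and edges {r i, r (i+1)} are added.\<close>
definition decorated_path :: "nat \<Rightarrow> (nat \<Rightarrow> 'a graph) \<Rightarrow> (nat \<Rightarrow> 'a) \<Rightarrow> 'a graph" where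
  "decorated_path n Gs r =
     ((\<Union>i\<in>{1..n}. verts (Gs i)),
      (\<Union>i\<in>{1..n}. edges (Gs i)) \<union> {{r i, r (Suc i)} | i. 1 \<le> i \<and> i < n})"

end

theory Submission
  imports Defs
begin

(* Order the vertices of G block by block, V i = verts (Gs i).  The only entries of x I - A
  between different blocks are the path edges r i -- r (i + 1), so expanding the determinant
  over the blocks s..t gives the three-term recurrence
    L s t = a s * L (s + 1) t - b s * b (s + 1) * L (s + 2) t,
  with a i = phi(G_i) and b i = phi(G_i - r_i).  Hence L s t = b s * ... * b t times the
  continuant of alpha_s, ..., alpha_t.  Deleting r_1 from G leaves b 1 * L 2 n and deleting r_n
  leaves L 1 (n - 1) * b n; both are b 1 * ... * b n times a continuant of the alphas, and the two
  continuants agree because continuants are invariant under reversal and the alphas form a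
  palindrome.  As phi(G) is the common numerator, alpha_1 and alpha_n of G coincide. *)

definition det_term :: "'a set \<Rightarrow> ('a \<Rightarrow> 'a \<Rightarrow> 'b::comm_ring_1) \<Rightarrow> ('a \<Rightarrow> 'a) \<Rightarrow> 'b" where
  "det_term S M p = of_int (sign p) * (\<Prod>x\<in>S. M x (p x))"

definition det_on :: "'a set \<Rightarrow> ('a \<Rightarrow> 'a \<Rightarrow> 'b::comm_ring_1) \<Rightarrow> 'b" where
  "det_on S M = (\<Sum>p | p permutes S. det_term S M p)"

lemma det_on_empty [simp]: "det_on {} M = 1"
  by (simp add: det_on_def det_term_def)

lemma det_on_cong:
  assumes "\<And>x y. x \<in> S \<Longrightarrow> y \<in> S \<Longrightarrow> M x y = M' x y"
  shows "det_on S M = det_on S M'"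
  unfolding det_on_def det_term_def
  by (intro sum.cong refl arg_cong2[where f = "(*)"] prod.cong)
     (auto intro!: assms simp: permutes_in_image)

lemma det_term_eq_0:
  assumes "finite S" "x \<in> S" "M x (p x) = 0"
  shows "det_term S M p = 0"
  unfolding det_term_def using assms by (metis mult_zero_right prod_zero)

lemma det_term_compose_disjoint:
  assumes "finite S1" "finite S2" "S1 \<inter> S2 = {}" "p1 permutes S1" "p2 permutes S2"
  shows "det_term (S1 \<union> S2) M (p1 \<circ> p2) = det_term S1 M p1 * det_term S2 M p2"
proof -
  have "sign (p1 \<circ> p2) = sign p1 * sign p2"
    using assms by (intro sign_compose permutes_imp_permutation)
  moreover have "(\<Prod>x\<in>S1. M x ((p1 \<circ> p2) x)) = (\<Prod>x\<in>S1. M x (p1 x))"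
    using assms(3) permutes_not_in[OF assms(5)] by (intro prod.cong) (auto simp: disjoint_iff)
  moreover have "(\<Prod>x\<in>S2. M x ((p1 \<circ> p2) x)) = (\<Prod>x\<in>S2. M x (p2 x))"
    using assms(3) permutes_in_image[OF assms(5)] permutes_not_in[OF assms(4)]
    by (intro prod.cong refl) (metis comp_apply disjoint_iff)
  ultimately show ?thesis
    using assms by (simp add: det_term_def prod.union_disjoint algebra_simps)
qed

lemma det_term_compose_transpose:
  assumes "finite S" "q permutes S" "u \<notin> S" "v \<notin> S" "u \<noteq> v"
  shows "det_term (insert u (insert v S)) M (q \<circ> transpose u v) = - (M u v * M v u) * det_term S M q"
proof -
  have q: "q u = u" "q v = v" using assms by (auto simp: permutes_not_in)
  have "sign (q \<circ> transpose u v) = - sign q"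
    using assms by (simp add: sign_compose permutes_imp_permutation permutation_swap_id sign_swap_id)
  moreover have "(\<Prod>x\<in>S. M x ((q \<circ> transpose u v) x)) = (\<Prod>x\<in>S. M x (q x))"
    using assms by (intro prod.cong refl) (metis comp_apply transpose_apply_other)
  ultimately show ?thesis
    using assms q by (simp add: det_term_def algebra_simps)
qed

lemma permutes_stabilizer_split:
  assumes "finite S1" "S1 \<inter> S2 = {}" "p permutes S1 \<union> S2" "\<forall>x\<in>S1. p x \<in> S1"
  shows "restrict_id p S1 permutes S1" "restrict_id p S2 permutes S2"
    "restrict_id p S1 \<circ> restrict_id p S2 = p"
proof -
  have inj: "inj p" using assms(3) by (rule permutes_inj)
  have S1: "p ` S1 = S1"
    using assms(1,4) inj by (intro endo_inj_surj) (auto intro: inj_on_subset)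
  have "p ` S2 = p ` ((S1 \<union> S2) - S1)"
    using assms(2) by (simp add: Un_Diff Diff_triv inf_commute)
  also have "\<dots> = S2"
    using assms(2) S1 permutes_image[OF assms(3)] by (auto simp: image_set_diff[OF inj])
  finally have S2: "p ` S2 = S2" .
  show "restrict_id p S1 permutes S1" "restrict_id p S2 permutes S2"
    using S1 S2 inj by (auto intro!: permutes_restrict_id simp: bij_betw_def inj_on_subset[OF inj])
  show "restrict_id p S1 \<circ> restrict_id p S2 = p"
    using assms(2) S2 permutes_not_in[OF assms(3)] by (auto simp: fun_eq_iff restrict_id_def)
qed

lemma sum_det_term_stabilizer:
  assumes fin: "finite S1" "finite S2" and disj: "S1 \<inter> S2 = {}"
  shows "(\<Sum>p | p permutes S1 \<union> S2 \<and> (\<forall>x\<in>S1. p x \<in> S1). det_term (S1 \<union> S2) M p)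
    = det_on S1 M * det_on S2 M"
proof -
  have "det_on S1 M * det_on S2 M =
      (\<Sum>(p1, p2) \<in> {p. p permutes S1} \<times> {p. p permutes S2}. det_term S1 M p1 * det_term S2 M p2)"
    unfolding det_on_def sum_product sum.cartesian_product by simp
  also have "\<dots> = (\<Sum>p | p permutes S1 \<union> S2 \<and> (\<forall>x\<in>S1. p x \<in> S1). det_term (S1 \<union> S2) M p)"
  proof (rule sum.reindex_bij_witness[where i = "\<lambda>p. (restrict_id p S1, restrict_id p S2)"
        and j = "\<lambda>(p1, p2). p1 \<circ> p2"])
    fix p assume "p \<in> {p. p permutes S1 \<union> S2 \<and> (\<forall>x\<in>S1. p x \<in> S1)}"
    then have "p permutes S1 \<union> S2" "\<forall>x\<in>S1. p x \<in> S1" by auto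
    from permutes_stabilizer_split[OF fin(1) disj this]
    show "(\<lambda>(p1, p2). p1 \<circ> p2) (restrict_id p S1, restrict_id p S2) = p"
      and "(restrict_id p S1, restrict_id p S2) \<in> {p. p permutes S1} \<times> {p. p permutes S2}"
      by auto
  next
    fix q assume "q \<in> {p. p permutes S1} \<times> {p. p permutes S2}"
    then obtain p1 p2 where q: "q = (p1, p2)" and p1: "p1 permutes S1" and p2: "p2 permutes S2"
      by auto
    have fix1: "p1 x = x" if "x \<notin> S1" for x using p1 that by (rule permutes_not_in)
    have fix2: "p2 x = x" if "x \<notin> S2" for x using p2 that by (rule permutes_not_in)
    have in1: "p1 x \<in> S1 \<longleftrightarrow> x \<in> S1" for x using p1 by (rule permutes_in_image)
    have in2: "p2 x \<in> S2 \<longleftrightarrow> x \<in> S2" for x using p2 by (rule permutes_in_image)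
    show "(restrict_id ((\<lambda>(p1, p2). p1 \<circ> p2) q) S1, restrict_id ((\<lambda>(p1, p2). p1 \<circ> p2) q) S2) = q"
      using q disj fix1 fix2 in2 by (auto simp: fun_eq_iff restrict_id_def disjoint_iff)
    have "p1 \<circ> p2 permutes S1 \<union> S2"
      using p1 p2 by (intro permutes_compose) (auto intro: permutes_subset)
    moreover have "\<forall>x\<in>S1. (p1 \<circ> p2) x \<in> S1"
      using disj fix2 in1 by (auto simp: disjoint_iff)
    ultimately show "(\<lambda>(p1, p2). p1 \<circ> p2) q \<in> {p. p permutes S1 \<union> S2 \<and> (\<forall>x\<in>S1. p x \<in> S1)}"
      using q by simp
    show "det_term (S1 \<union> S2) M ((\<lambda>(p1, p2). p1 \<circ> p2) q) =
        (\<lambda>(p1, p2). det_term S1 M p1 * det_term S2 M p2) q"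
      using q fin disj p1 p2 by (simp add: det_term_compose_disjoint)
  qed
  finally show ?thesis ..
qed

lemma det_on_Un_block_triangular:
  assumes fin: "finite S1" "finite S2" and disj: "S1 \<inter> S2 = {}"
    and zero: "\<And>x y. x \<in> S1 \<Longrightarrow> y \<in> S2 \<Longrightarrow> M x y = 0"
  shows "det_on (S1 \<union> S2) M = det_on S1 M * det_on S2 M"
proof -
  have "det_term (S1 \<union> S2) M p = 0"
    if p: "p permutes S1 \<union> S2" and x: "x \<in> S1" "p x \<notin> S1" for p x
  proof -
    have "p x \<in> S2" using permutes_in_image[OF p, of x] x by auto
    then show ?thesis using fin x zero by (intro det_term_eq_0[of _ x]) auto
  qed
  then have "det_on (S1 \<union> S2) M =
      (\<Sum>p | p permutes S1 \<union> S2 \<and> (\<forall>x\<in>S1. p x \<in> S1). det_term (S1 \<union> S2) M p)"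
    unfolding det_on_def using fin by (intro sum.mono_neutral_right) (auto simp: finite_permutations)
  then show ?thesis using sum_det_term_stabilizer[OF fin disj] by simp
qed

lemma permutes_Un_single_crossing:
  assumes fin: "finite S1" and disj: "S1 \<inter> S2 = {}" and p: "p permutes S1 \<union> S2"
    and x: "x \<in> S1" "p x \<notin> S1"
    and out: "\<And>x. x \<in> S1 \<Longrightarrow> p x \<in> S2 \<Longrightarrow> x = u \<and> p x = v"
    and into: "\<And>y. y \<in> S2 \<Longrightarrow> p y \<in> S1 \<Longrightarrow> y = v \<and> p y = u"
  shows "p u = v" "p v = u" "\<forall>x\<in>S1 - {u}. p x \<in> S1"
proof -
  have in_S: "p y \<in> S1 \<union> S2 \<longleftrightarrow> y \<in> S1 \<union> S2" for y using p by (rule permutes_in_image)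
  have "x = u \<and> p x = v" using out x in_S by blast
  then have u: "u \<in> S1" and pu: "p u = v" and v: "v \<in> S2" using x in_S by auto
  then show "p u = v" by simp
  show "\<forall>x\<in>S1 - {u}. p x \<in> S1" using out in_S by blast
  have "card S1 > 0" using fin u by (auto simp: card_gt_0_iff)
  then have "card (p ` (S1 - {u})) < card S1"
    using fin u permutes_inj_on[OF p] by (simp add: card_image)
  then have "\<not> S1 \<subseteq> p ` (S1 - {u})"
    using fin by (meson card_mono finite_Diff finite_imageI leD)
  then obtain y where y: "y \<in> S1" "y \<notin> p ` (S1 - {u})" by blast
  obtain w where w: "w \<in> S1 \<union> S2" "p w = y"
    using y permutes_image[OF p] by (metis UnI1 imageE)
  have "w \<in> S2" using w y pu v disj by auto
  then show "p v = u" using into w y by blast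
qed

lemma sum_det_term_link:
  assumes fin: "finite S1" "finite S2" and disj: "S1 \<inter> S2 = {}" and u: "u \<in> S1" and v: "v \<in> S2"
  shows "(\<Sum>p | p permutes S1 \<union> S2 \<and> p u = v \<and> p v = u \<and> (\<forall>x\<in>S1 - {u}. p x \<in> S1).
      det_term (S1 \<union> S2) M p) = - (M u v * M v u) * det_on (S1 - {u}) M * det_on (S2 - {v}) M"
proof -
  let ?S = "(S1 - {u}) \<union> (S2 - {v})"
  have S: "S1 \<union> S2 = insert u (insert v ?S)" using u v by auto
  have uv: "u \<notin> S2" "v \<notin> S1" "u \<noteq> v" using u v disj by auto
  have "(\<Sum>q | q permutes ?S \<and> (\<forall>x\<in>S1 - {u}. q x \<in> S1 - {u}). det_term ?S M q) =
      det_on (S1 - {u}) M * det_on (S2 - {v}) M"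
    using fin disj by (intro sum_det_term_stabilizer) auto
  then have "- (M u v * M v u) * det_on (S1 - {u}) M * det_on (S2 - {v}) M =
      (\<Sum>q | q permutes ?S \<and> (\<forall>x\<in>S1 - {u}. q x \<in> S1 - {u}). - (M u v * M v u) * det_term ?S M q)"
    by (simp only: sum_distrib_left[symmetric] mult.assoc)
  also have "\<dots> = (\<Sum>p | p permutes S1 \<union> S2 \<and> p u = v \<and> p v = u \<and> (\<forall>x\<in>S1 - {u}. p x \<in> S1).
      det_term (S1 \<union> S2) M p)"
  proof (rule sum.reindex_bij_witness[where i = "\<lambda>p. p \<circ> transpose u v" and j = "\<lambda>q. q \<circ> transpose u v"])
    fix p assume "p \<in> {p. p permutes S1 \<union> S2 \<and> p u = v \<and> p v = u \<and> (\<forall>x\<in>S1 - {u}. p x \<in> S1)}"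
    then have p: "p permutes S1 \<union> S2" "p u = v" "p v = u" "\<forall>x\<in>S1 - {u}. p x \<in> S1" by auto
    show "p \<circ> transpose u v \<circ> transpose u v = p" by (simp add: comp_assoc)
    have "p \<circ> transpose u v permutes S1 \<union> S2"
      using p(1) u v by (intro permutes_compose permutes_swap_id) auto
    then have "p \<circ> transpose u v permutes ?S"
    proof (rule permutes_superset)
      show "(p \<circ> transpose u v) x = x" if "x \<in> S1 \<union> S2 - ?S" for x
        using that p(2,3) by auto
    qed
    moreover have "(p \<circ> transpose u v) x \<in> S1 - {u}" if x: "x \<in> S1 - {u}" for x
    proof -
      have "x \<noteq> v" using x uv by auto
      then have "p x \<noteq> u" using p(3) permutes_inj[OF p(1)] by (auto dest: injD)
      then show ?thesis using x p(4) \<open>x \<noteq> v\<close> by simp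
    qed
    ultimately show "p \<circ> transpose u v \<in> {q. q permutes ?S \<and> (\<forall>x\<in>S1 - {u}. q x \<in> S1 - {u})}"
      by blast
  next
    fix q assume "q \<in> {q. q permutes ?S \<and> (\<forall>x\<in>S1 - {u}. q x \<in> S1 - {u})}"
    then have q: "q permutes ?S" "\<forall>x\<in>S1 - {u}. q x \<in> S1 - {u}" by auto
    have fixed: "q u = u" "q v = v" using permutes_not_in[OF q(1)] uv by auto
    show "q \<circ> transpose u v \<circ> transpose u v = q" by (simp add: comp_assoc)
    have "q permutes S1 \<union> S2" using q(1) by (rule permutes_subset) auto
    then have "q \<circ> transpose u v permutes S1 \<union> S2"
      using u v by (intro permutes_compose permutes_swap_id) auto
    moreover have "(q \<circ> transpose u v) x \<in> S1" if x: "x \<in> S1 - {u}" for x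
    proof -
      have "x \<noteq> v" using x uv by auto
      then show ?thesis using x q(2) by simp
    qed
    ultimately show "q \<circ> transpose u v \<in>
        {p. p permutes S1 \<union> S2 \<and> p u = v \<and> p v = u \<and> (\<forall>x\<in>S1 - {u}. p x \<in> S1)}"
      using fixed uv by auto
    show "det_term (S1 \<union> S2) M (q \<circ> transpose u v) = - (M u v * M v u) * det_term ?S M q"
      unfolding S using fin q(1) uv by (intro det_term_compose_transpose) auto
  qed
  finally show ?thesis ..
qed

lemma det_on_Un_link:
  assumes fin: "finite S1" "finite S2" and disj: "S1 \<inter> S2 = {}" and u: "u \<in> S1" and v: "v \<in> S2"
    and zero: "\<And>x y. x \<in> S1 \<Longrightarrow> y \<in> S2 \<Longrightarrow> x \<noteq> u \<or> y \<noteq> v \<Longrightarrow> M x y = 0 \<and> M y x = 0"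
  shows "det_on (S1 \<union> S2) M =
    det_on S1 M * det_on S2 M - M u v * M v u * det_on (S1 - {u}) M * det_on (S2 - {v}) M"
proof -
  let ?P = "{p. p permutes S1 \<union> S2}"
  let ?Q = "{p. p permutes S1 \<union> S2 \<and> (\<forall>x\<in>S1. p x \<in> S1)}"
  let ?R = "{p. p permutes S1 \<union> S2 \<and> p u = v \<and> p v = u \<and> (\<forall>x\<in>S1 - {u}. p x \<in> S1)}"
  have finS: "finite (S1 \<union> S2)" using fin by simp
  then have finP: "finite ?P" by (rule finite_permutations)
  have "det_term (S1 \<union> S2) M p = 0" if p: "p \<in> ?P - ?Q - ?R" for p
  proof (rule ccontr)
    assume "det_term (S1 \<union> S2) M p \<noteq> 0"
    then have nz: "M x (p x) \<noteq> 0" if "x \<in> S1 \<union> S2" for x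
      using det_term_eq_0[OF finS that] by blast
    have perm: "p permutes S1 \<union> S2" using p by simp
    have out: "x = u \<and> p x = v" if "x \<in> S1" "p x \<in> S2" for x
      using zero[OF that] nz[of x] that by blast
    have into: "y = v \<and> p y = u" if "y \<in> S2" "p y \<in> S1" for y
      using zero[OF that(2,1)] nz[of y] that by blast
    obtain x where "x \<in> S1" "p x \<notin> S1" using p by auto
    from permutes_Un_single_crossing[OF fin(1) disj perm this out into]
    have "p \<in> ?R" using perm by simp
    then show False using p by simp
  qed
  moreover have "?R \<subseteq> ?P - ?Q" using u v disj by auto
  ultimately have "sum (det_term (S1 \<union> S2) M) (?P - ?Q) = sum (det_term (S1 \<union> S2) M) ?R"
    using finP by (intro sum.mono_neutral_right) auto
  moreover have "det_on (S1 \<union> S2) M =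
      sum (det_term (S1 \<union> S2) M) ?Q + sum (det_term (S1 \<union> S2) M) (?P - ?Q)"
    unfolding det_on_def using finP by (subst sum.subset_diff[of ?Q]) auto
  ultimately show ?thesis
    using sum_det_term_stabilizer[OF fin disj, of M] sum_det_term_link[OF fin disj u v, of M]
    by simp
qed

fun continuant :: "'a::comm_ring_1 list \<Rightarrow> 'a" where
  "continuant [] = 1"
| "continuant [x] = x"
| "continuant (x # y # zs) = x * continuant (y # zs) - continuant zs"

lemma continuant_append_two: "continuant (xs @ [y, z]) = continuant (xs @ [y]) * z - continuant xs"
proof (induction xs rule: continuant.induct)
  case (3 x y' zs)
  have IH: "continuant (y' # zs @ [y, z]) = continuant (y' # zs @ [y]) * z - continuant (y' # zs)"
    "continuant (zs @ [y, z]) = continuant (zs @ [y]) * z - continuant zs"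
    using 3 by simp_all
  show ?case by (simp add: IH algebra_simps)
qed (simp_all add: algebra_simps)

lemma continuant_rev [simp]: "continuant (rev xs) = continuant xs"
  by (induction xs rule: continuant.induct) (simp_all add: continuant_append_two algebra_simps)

lemma rev_map_upt_reflect:
  assumes "\<And>i. i \<in> {1..n} \<Longrightarrow> f i = f (n + 1 - i)"
  shows "rev (map f [2..<Suc n]) = map f [1..<n]"
proof (rule sym, rule map_upt_eqI)
  fix k assume "k < length (rev (map f [2..<Suc n]))"
  then have k: "k < n - 1" by (simp del: upt_Suc)
  then have "Suc (Suc (n - Suc (Suc k))) = n - k" by linarith
  then have "rev (map f [2..<Suc n]) ! k = f (n - k)"
    using k by (simp add: rev_nth del: upt_Suc)
  also have "\<dots> = f (1 + k)"
    using assms[of "1 + k"] k by simp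
  finally show "rev (map f [2..<Suc n]) ! k = f (1 + k)" .
qed (simp del: upt_Suc)

lemma three_term_recurrence_continuant:
  fixes f a b :: "nat \<Rightarrow> 'a::field"
  assumes last: "f (Suc t) = 1" "f t = a t"
    and rec: "\<And>s. m \<le> s \<Longrightarrow> s < t \<Longrightarrow> f s = a s * f (Suc s) - b s * b (Suc s) * f (Suc (Suc s))"
    and nz: "\<And>i. m \<le> i \<Longrightarrow> i \<le> t \<Longrightarrow> b i \<noteq> 0"
    and s: "m \<le> s" "s \<le> Suc t"
  shows "f s = (\<Prod>i=s..t. b i) * continuant (map (\<lambda>i. a i / b i) [s..<Suc t])"
  using s
proof (induction "Suc t - s" arbitrary: s rule: less_induct)
  case less
  consider "s = Suc t" | "s = t" | "s < t" using less.prems by linarith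
  then show ?case
  proof cases
    case 1
    then show ?thesis using last by simp
  next
    case 2
    then show ?thesis using last nz less.prems by simp
  next
    case 3
    have IH: "f s' = (\<Prod>i=s'..t. b i) * continuant (map (\<lambda>i. a i / b i) [s'..<Suc t])"
      if "s' \<in> {Suc s, Suc (Suc s)}" for s'
      using that 3 less.prems by (intro less.hyps) auto
    define P where "P = (\<Prod>i=Suc (Suc s)..t. b i)"
    define ys where "ys = map (\<lambda>i. a i / b i) [Suc (Suc s)..<Suc t]"
    have f1: "f (Suc s) = b (Suc s) * P * continuant (a (Suc s) / b (Suc s) # ys)"
      using IH[of "Suc s"] 3
      by (simp add: P_def ys_def upt_conv_Cons prod.atLeast_Suc_atMost del: upt_Suc)
    have f2: "f (Suc (Suc s)) = P * continuant ys"
      using IH[of "Suc (Suc s)"] by (simp add: P_def ys_def)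
    have "b s \<noteq> 0" using nz 3 less.prems by simp
    have "(\<Prod>i=s..t. b i) * continuant (map (\<lambda>i. a i / b i) [s..<Suc t]) =
        b s * b (Suc s) * P * continuant (a s / b s # a (Suc s) / b (Suc s) # ys)"
      using 3 by (simp add: P_def ys_def upt_conv_Cons prod.atLeast_Suc_atMost del: upt_Suc)
    also have "\<dots> = a s * f (Suc s) - b s * b (Suc s) * f (Suc (Suc s))"
      using \<open>b s \<noteq> 0\<close> by (simp add: f1 f2 field_simps)
    also have "\<dots> = f s" using rec 3 less.prems by simp
    finally show ?thesis ..
  qed
qed

locale path_of_blocks =
  fixes n :: nat and V :: "nat \<Rightarrow> 'a set" and r :: "nat \<Rightarrow> 'a" and M :: "'a \<Rightarrow> 'a \<Rightarrow> 'b::idom"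
  assumes finite_block: "\<And>i. i \<in> {1..n} \<Longrightarrow> finite (V i)"
    and root_in_block: "\<And>i. i \<in> {1..n} \<Longrightarrow> r i \<in> V i"
    and blocks_disjoint: "\<And>i j. i \<in> {1..n} \<Longrightarrow> j \<in> {1..n} \<Longrightarrow> i \<noteq> j \<Longrightarrow> V i \<inter> V j = {}"
    and entry_between_blocks: "\<And>i j x y. i \<in> {1..n} \<Longrightarrow> j \<in> {1..n} \<Longrightarrow> i \<noteq> j \<Longrightarrow>
      x \<in> V i \<Longrightarrow> y \<in> V j \<Longrightarrow> M x y \<noteq> 0 \<Longrightarrow> (j = Suc i \<or> i = Suc j) \<and> x = r i \<and> y = r j"
    and link_entries: "\<And>i. 1 \<le> i \<Longrightarrow> i < n \<Longrightarrow> M (r i) (r (Suc i)) * M (r (Suc i)) (r i) = 1"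
begin

definition blocks :: "nat \<Rightarrow> nat \<Rightarrow> 'a set" where
  "blocks s t = (\<Union>i\<in>{s..t}. V i)"

definition block_alpha :: "nat \<Rightarrow> 'b fract" where
  "block_alpha i = Fract (det_on (V i) M) (det_on (V i - {r i}) M)"

lemma finite_blocks: "1 \<le> s \<Longrightarrow> t \<le> n \<Longrightarrow> finite (blocks s t)"
  using finite_block by (auto simp: blocks_def)

lemma blocks_empty: "t < s \<Longrightarrow> blocks s t = {}"
  by (simp add: blocks_def)

lemma blocks_single: "blocks s s = V s"
  by (simp add: blocks_def)

lemma blocks_split_first: "s \<le> t \<Longrightarrow> blocks s t = V s \<union> blocks (Suc s) t"
  by (auto simp: blocks_def Icc_eq_insert_lb_nat)

lemma blocks_split_last: "s \<le> Suc t \<Longrightarrow> blocks s (Suc t) = blocks s t \<union> V (Suc t)"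
  by (auto simp: blocks_def atLeastAtMostSuc_conv)

lemma block_disjoint_blocks:
  assumes "i \<in> {1..n}" "1 \<le> s" "t \<le> n" "i \<notin> {s..t}"
  shows "V i \<inter> blocks s t = {}"
proof -
  have "V i \<inter> V k = {}" if "k \<in> {s..t}" for k
    using assms that by (intro blocks_disjoint) auto
  then show ?thesis unfolding blocks_def by blast
qed

lemma det_delete_first_root:
  assumes "1 \<le> s" "s \<le> t" "t \<le> n"
  shows "det_on (blocks s t - {r s}) M = det_on (V s - {r s}) M * det_on (blocks (Suc s) t) M"
proof -
  have s: "s \<in> {1..n}" using assms by simp
  have disj: "V s \<inter> blocks (Suc s) t = {}"
    using assms by (intro block_disjoint_blocks) auto
  then have "blocks s t - {r s} = (V s - {r s}) \<union> blocks (Suc s) t"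
    using assms root_in_block[OF s] blocks_split_first by auto
  also have "det_on \<dots> M = det_on (V s - {r s}) M * det_on (blocks (Suc s) t) M"
  proof (rule det_on_Un_block_triangular)
    show "finite (V s - {r s})" "finite (blocks (Suc s) t)"
      using assms finite_block[OF s] finite_blocks by auto
    show "(V s - {r s}) \<inter> blocks (Suc s) t = {}" using disj by blast
  next
    fix x y assume x: "x \<in> V s - {r s}" and y: "y \<in> blocks (Suc s) t"
    obtain k where "k \<in> {Suc s..t}" "y \<in> V k" using y by (auto simp: blocks_def)
    then show "M x y = 0" using x assms entry_between_blocks[OF s, of k x y] by auto
  qed
  finally show ?thesis .
qed

lemma det_delete_last_root:
  assumes "1 \<le> s" "s \<le> t" "t \<le> n"
  shows "det_on (blocks s t - {r t}) M = det_on (blocks s (t - 1)) M * det_on (V t - {r t}) M"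
proof -
  have t: "t \<in> {1..n}" using assms by simp
  have split: "blocks s t = blocks s (t - 1) \<union> V t"
    using assms blocks_split_last[of s "t - 1"] by simp
  have disj: "V t \<inter> blocks s (t - 1) = {}"
    using assms by (intro block_disjoint_blocks) auto
  then have "blocks s t - {r t} = blocks s (t - 1) \<union> (V t - {r t})"
    using split root_in_block[OF t] by auto
  also have "det_on \<dots> M = det_on (blocks s (t - 1)) M * det_on (V t - {r t}) M"
  proof (rule det_on_Un_block_triangular)
    show "finite (blocks s (t - 1))" "finite (V t - {r t})"
      using assms finite_block[OF t] finite_blocks by auto
    show "blocks s (t - 1) \<inter> (V t - {r t}) = {}" using disj by blast
  next
    fix x y assume x: "x \<in> blocks s (t - 1)" and y: "y \<in> V t - {r t}"
    obtain k where k: "k \<in> {s..t - 1}" "x \<in> V k" using x by (auto simp: blocks_def)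
    then have "k \<in> {1..n}" "k \<noteq> t" using assms by auto
    then show "M x y = 0" using k y entry_between_blocks[OF _ t, of k x y] by auto
  qed
  finally show ?thesis .
qed

lemma det_blocks_recurrence:
  assumes "1 \<le> s" "s < t" "t \<le> n"
  shows "det_on (blocks s t) M = det_on (V s) M * det_on (blocks (Suc s) t) M
    - det_on (V s - {r s}) M * det_on (V (Suc s) - {r (Suc s)}) M * det_on (blocks (Suc (Suc s)) t) M"
proof -
  have s: "s \<in> {1..n}" and s': "Suc s \<in> {1..n}" using assms by auto
  have "det_on (V s \<union> blocks (Suc s) t) M = det_on (V s) M * det_on (blocks (Suc s) t) M
      - M (r s) (r (Suc s)) * M (r (Suc s)) (r s) *
        det_on (V s - {r s}) M * det_on (blocks (Suc s) t - {r (Suc s)}) M"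
  proof (rule det_on_Un_link)
    show "finite (V s)" "finite (blocks (Suc s) t)"
      using assms finite_block[OF s] finite_blocks by auto
    show "V s \<inter> blocks (Suc s) t = {}"
      using assms by (intro block_disjoint_blocks) auto
    show "r s \<in> V s" "r (Suc s) \<in> blocks (Suc s) t"
      using assms root_in_block[OF s] root_in_block[OF s'] by (auto simp: blocks_def)
  next
    fix x y assume x: "x \<in> V s" and y: "y \<in> blocks (Suc s) t" and xy: "x \<noteq> r s \<or> y \<noteq> r (Suc s)"
    obtain k where k: "k \<in> {Suc s..t}" "y \<in> V k" using y by (auto simp: blocks_def)
    show "M x y = 0 \<and> M y x = 0"
      using x k xy assms entry_between_blocks[OF s, of k x y] entry_between_blocks[OF _ s, of k y x]
      by auto
  qed
  then show ?thesis
    using assms blocks_split_first[of s t] det_delete_first_root[of "Suc s" t] link_entries[of s]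
    by simp
qed

lemma det_blocks_continuant:
  assumes nz: "\<And>i. i \<in> {1..n} \<Longrightarrow> det_on (V i - {r i}) M \<noteq> 0"
    and "1 \<le> s" "s \<le> Suc t" "t \<le> n"
  shows "Fract (det_on (blocks s t) M) 1 =
    (\<Prod>i=s..t. Fract (det_on (V i - {r i}) M) 1) * continuant (map block_alpha [s..<Suc t])"
proof -
  have alpha: "(\<lambda>i. Fract (det_on (V i) M) 1 / Fract (det_on (V i - {r i}) M) 1) = block_alpha"
    by (simp add: fun_eq_iff block_alpha_def)
  have "Fract (det_on (blocks s t) M) 1 = (\<Prod>i=s..t. Fract (det_on (V i - {r i}) M) 1) *
    continuant (map (\<lambda>i. Fract (det_on (V i) M) 1 / Fract (det_on (V i - {r i}) M) 1) [s..<Suc t])"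
  proof (rule three_term_recurrence_continuant[where m = 1])
    fix s assume "1 \<le> s" "s < t"
    then show "Fract (det_on (blocks s t) M) 1 = Fract (det_on (V s) M) 1 * Fract (det_on (blocks (Suc s) t) M) 1
      - Fract (det_on (V s - {r s}) M) 1 * Fract (det_on (V (Suc s) - {r (Suc s)}) M) 1 *
        Fract (det_on (blocks (Suc (Suc s)) t) M) 1"
      using assms det_blocks_recurrence by simp
  qed (use assms in \<open>simp_all add: blocks_empty blocks_single One_fract_def Zero_fract_def eq_fract\<close>)
  then show ?thesis unfolding alpha .
qed

lemma det_delete_end_roots_eq:
  assumes "1 \<le> n"
    and nz: "\<And>i. i \<in> {1..n} \<Longrightarrow> det_on (V i - {r i}) M \<noteq> 0"
    and sym: "\<And>i. i \<in> {1..n} \<Longrightarrow> block_alpha i = block_alpha (n + 1 - i)"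
  shows "det_on (blocks 1 n - {r 1}) M = det_on (blocks 1 n - {r n}) M"
proof -
  define \<beta> where "\<beta> i = Fract (det_on (V i - {r i}) M) 1" for i
  have first: "Fract (det_on (blocks 2 n) M) 1 =
      (\<Prod>i=2..n. \<beta> i) * continuant (map block_alpha [2..<Suc n])"
    unfolding \<beta>_def using nz \<open>1 \<le> n\<close> by (intro det_blocks_continuant) auto
  have "Fract (det_on (blocks 1 (n - 1)) M) 1 =
      (\<Prod>i=1..n - 1. \<beta> i) * continuant (map block_alpha [1..<Suc (n - 1)])"
    unfolding \<beta>_def using nz \<open>1 \<le> n\<close> by (intro det_blocks_continuant) auto
  then have last: "Fract (det_on (blocks 1 (n - 1)) M) 1 =
      (\<Prod>i=1..n - 1. \<beta> i) * continuant (map block_alpha [1..<n])"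
    using \<open>1 \<le> n\<close> by (simp del: upt_Suc)
  have reflect: "map block_alpha [1..<n] = rev (map block_alpha [2..<Suc n])"
    using sym by (rule rev_map_upt_reflect[symmetric])
  have "(\<Prod>i=1..n. \<beta> i) = \<beta> 1 * (\<Prod>i=2..n. \<beta> i)"
    using \<open>1 \<le> n\<close> by (simp add: prod.atLeast_Suc_atMost numeral_2_eq_2)
  moreover have "(\<Prod>i=1..n. \<beta> i) = (\<Prod>i=1..n - 1. \<beta> i) * \<beta> n"
    using \<open>1 \<le> n\<close> by (cases n) (simp_all add: prod.cl_ivl_Suc)
  ultimately have "\<beta> 1 * Fract (det_on (blocks 2 n) M) 1 = Fract (det_on (blocks 1 (n - 1)) M) 1 * \<beta> n"
    unfolding first last reflect continuant_rev by (simp add: mult_ac)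
  then have "Fract (det_on (blocks 1 n - {r 1}) M) 1 = Fract (det_on (blocks 1 n - {r n}) M) 1"
    using \<open>1 \<le> n\<close> det_delete_first_root[of 1 n] det_delete_last_root[of 1 n]
    by (simp add: \<beta>_def numeral_2_eq_2)
  then show ?thesis by (simp add: eq_fract)
qed

end

definition charmat :: "'a graph \<Rightarrow> 'a \<Rightarrow> 'a \<Rightarrow> int poly" where
  "charmat G v w = (if w = v then [:0, 1:] else 0) - [:adj G v w:]"

lemma charpoly_eq_det_on: "charpoly G = det_on (verts G) (charmat G)"
  unfolding charpoly_def det_on_def det_term_def charmat_def ..

lemma charpoly_delete_vertex: "charpoly (delete_vertex G v) = det_on (verts G - {v}) (charmat G)"
proof -
  have "charpoly (delete_vertex G v) = det_on (verts G - {v}) (charmat (delete_vertex G v))"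
    by (simp add: charpoly_eq_det_on delete_vertex_def verts_def)
  also have "\<dots> = det_on (verts G - {v}) (charmat G)"
    by (rule det_on_cong) (auto simp: charmat_def adj_def delete_vertex_def edges_def)
  finally show ?thesis .
qed

lemma degree_det_term_charmat:
  assumes "finite S" "p permutes S"
  shows "degree (det_term S (charmat G) p) \<le> card {x \<in> S. p x = x}"
proof -
  have "degree (det_term S (charmat G) p) \<le> degree (\<Prod>x\<in>S. charmat G x (p x))"
    unfolding det_term_def by (simp add: of_int_poly)
  also have "\<dots> \<le> (\<Sum>x\<in>S. degree (charmat G x (p x)))"
    by (rule degree_prod_sum_le[OF assms(1), unfolded o_def])
  also have "\<dots> \<le> (\<Sum>x\<in>S. if p x = x then 1 else 0)"
    by (intro sum_mono) (simp add: charmat_def)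
  also have "\<dots> = card {x \<in> S. p x = x}"
    using assms(1) by (simp add: sum.If_cases Int_def conj_commute)
  finally show ?thesis .
qed

lemma coeff_det_on_charmat:
  assumes "finite S"
  shows "coeff (det_on S (charmat G)) (card S) = 1"
proof -
  have "coeff (det_term S (charmat G) p) (card S) = 0" if p: "p \<in> {p. p permutes S} - {id}" for p
  proof -
    obtain x where "x \<in> S" "p x \<noteq> x" using p permutes_not_in by (metis DiffE mem_Collect_eq singletonI eq_id_iff)
    then have "card {x \<in> S. p x = x} < card S"
      using assms by (intro psubset_card_mono) auto
    then show ?thesis
      using degree_det_term_charmat[OF assms, of p G] p by (simp add: coeff_eq_0)
  qed
  then have "coeff (det_on S (charmat G)) (card S) = coeff (det_term S (charmat G) id) (card S)"
    unfolding det_on_def coeff_sum using assms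
    by (simp add: sum.remove[of _ id] finite_permutations)
  also have "det_term S (charmat G) id = (\<Prod>x\<in>S. [:- adj G x x, 1:])"
    by (simp add: det_term_def charmat_def)
  also have "coeff \<dots> (card S) = 1"
  proof -
    have "degree (\<Prod>x\<in>S. [:- adj G x x, 1:]) = card S"
      by (simp add: degree_prod_eq_sum_degree)
    moreover have "lead_coeff (\<Prod>x\<in>S. [:- adj G x x, 1:]) = 1"
      by (simp add: lead_coeff_prod)
    ultimately show ?thesis by simp
  qed
  finally show ?thesis .
qed

lemma det_on_charmat_nonzero: "finite S \<Longrightarrow> det_on S (charmat G) \<noteq> 0"
  using coeff_det_on_charmat[of S G] by auto

locale decorated_path_graph =
  fixes n :: nat and Gs :: "nat \<Rightarrow> 'a graph" and r :: "nat \<Rightarrow> 'a"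
  assumes simple: "\<And>i. i \<in> {1..n} \<Longrightarrow> simple_graph (Gs i)"
    and root: "\<And>i. i \<in> {1..n} \<Longrightarrow> r i \<in> verts (Gs i)"
    and disjoint: "\<And>i j. i \<in> {1..n} \<Longrightarrow> j \<in> {1..n} \<Longrightarrow> i \<noteq> j \<Longrightarrow>
      verts (Gs i) \<inter> verts (Gs j) = {}"
begin

abbreviation G :: "'a graph" where
  "G \<equiv> decorated_path n Gs r"

lemma mem_edges_decorated_path:
  "e \<in> edges G \<longleftrightarrow> (\<exists>i\<in>{1..n}. e \<in> edges (Gs i)) \<or> (\<exists>i. 1 \<le> i \<and> i < n \<and> e = {r i, r (Suc i)})"
  by (auto simp: decorated_path_def edges_def)

lemma block_unique: "i \<in> {1..n} \<Longrightarrow> j \<in> {1..n} \<Longrightarrow> x \<in> verts (Gs i) \<Longrightarrow> x \<in> verts (Gs j) \<Longrightarrow> i = j"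
  using disjoint by blast

lemma edge_subset_block: "i \<in> {1..n} \<Longrightarrow> e \<in> edges (Gs i) \<Longrightarrow> e \<subseteq> verts (Gs i)"
  using simple by (auto simp: simple_graph_def)

lemma edge_within_block_iff:
  assumes i: "i \<in> {1..n}" and xy: "x \<in> verts (Gs i)" "y \<in> verts (Gs i)"
  shows "{x, y} \<in> edges G \<longleftrightarrow> {x, y} \<in> edges (Gs i)"
proof
  assume "{x, y} \<in> edges G"
  then consider j where "j \<in> {1..n}" "{x, y} \<in> edges (Gs j)"
    | j where "1 \<le> j" "j < n" "{x, y} = {r j, r (Suc j)}"
    unfolding mem_edges_decorated_path by blast
  then show "{x, y} \<in> edges (Gs i)"
  proof cases
    case 1
    then show ?thesis using i xy edge_subset_block block_unique by blast
  next
    case 2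
    have j: "j \<in> {1..n}" "Suc j \<in> {1..n}" using 2 by auto
    have "r j \<in> verts (Gs i)" "r (Suc j) \<in> verts (Gs i)"
      using 2(3) xy by (auto simp: doubleton_eq_iff)
    then have "j = i" "Suc j = i"
      using block_unique[OF j(1) i] block_unique[OF j(2) i] root[OF j(1)] root[OF j(2)] by auto
    then show ?thesis by simp
  qed
qed (use i in \<open>auto simp: mem_edges_decorated_path\<close>)

lemma edge_between_blocks:
  assumes ij: "i \<in> {1..n}" "j \<in> {1..n}" "i \<noteq> j" and x: "x \<in> verts (Gs i)" and y: "y \<in> verts (Gs j)"
    and e: "{x, y} \<in> edges G"
  shows "(j = Suc i \<or> i = Suc j) \<and> x = r i \<and> y = r j"
proof -
  from e consider k where "k \<in> {1..n}" "{x, y} \<in> edges (Gs k)"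
    | k where "1 \<le> k" "k < n" "{x, y} = {r k, r (Suc k)}"
    unfolding mem_edges_decorated_path by blast
  then show ?thesis
  proof cases
    case 1
    then have "x \<in> verts (Gs k)" "y \<in> verts (Gs k)" using edge_subset_block by auto
    then have "k = i" "k = j" using block_unique[OF 1(1)] ij x y by auto
    then show ?thesis using ij(3) by simp
  next
    case 2
    then have k: "k \<in> {1..n}" "Suc k \<in> {1..n}" by auto
    from 2 consider "x = r k" "y = r (Suc k)" | "x = r (Suc k)" "y = r k"
      by (auto simp: doubleton_eq_iff)
    then show ?thesis
    proof cases
      case 1
      then have "i = k" "j = Suc k"
        using block_unique[OF ij(1) k(1)] block_unique[OF ij(2) k(2)] x y root[OF k(1)] root[OF k(2)]
        by auto
      then show ?thesis using 1 by simp
    next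
      case 2
      then have "i = Suc k" "j = k"
        using block_unique[OF ij(1) k(2)] block_unique[OF ij(2) k(1)] x y root[OF k(1)] root[OF k(2)]
        by auto
      then show ?thesis using 2 by simp
    qed
  qed
qed

sublocale path_of_blocks n "\<lambda>i. verts (Gs i)" r "charmat G"
proof
  show "finite (verts (Gs i))" if "i \<in> {1..n}" for i
    using simple[OF that] by (simp add: simple_graph_def)
next
  fix i j x y
  assume ij: "i \<in> {1..n}" "j \<in> {1..n}" "i \<noteq> j" and x: "x \<in> verts (Gs i)" and y: "y \<in> verts (Gs j)"
    and nz: "charmat G x y \<noteq> 0"
  have "y \<noteq> x" using ij x y disjoint by blast
  then have "{x, y} \<in> edges G" using nz by (simp add: charmat_def adj_def split: if_splits)
  then show "(j = Suc i \<or> i = Suc j) \<and> x = r i \<and> y = r j"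
    by (rule edge_between_blocks[OF ij x y])
next
  fix i assume "1 \<le> i" "i < n"
  then have "{r i, r (Suc i)} \<in> edges G" "r i \<noteq> r (Suc i)"
    using root[of i] root[of "Suc i"] disjoint[of i "Suc i"] by (auto simp: mem_edges_decorated_path)
  then show "charmat G (r i) (r (Suc i)) * charmat G (r (Suc i)) (r i) = 1"
    by (simp add: charmat_def adj_def insert_commute)
qed (use root disjoint in auto)

lemma verts_decorated_path: "verts G = blocks 1 n"
  unfolding blocks_def by (simp add: decorated_path_def verts_def)

lemma charmat_block:
  assumes "i \<in> {1..n}" "x \<in> verts (Gs i)" "y \<in> verts (Gs i)"
  shows "charmat (Gs i) x y = charmat G x y"
  using edge_within_block_iff[OF assms] by (simp add: charmat_def adj_def)

lemma charpoly_block: "i \<in> {1..n} \<Longrightarrow> charpoly (Gs i) = det_on (verts (Gs i)) (charmat G)"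
  unfolding charpoly_eq_det_on by (rule det_on_cong) (simp add: charmat_block)

lemma charpoly_delete_root:
  "i \<in> {1..n} \<Longrightarrow> charpoly (delete_vertex (Gs i) (r i)) = det_on (verts (Gs i) - {r i}) (charmat G)"
  unfolding charpoly_delete_vertex by (rule det_on_cong) (simp add: charmat_block)

lemma alpha_eq_block_alpha: "i \<in> {1..n} \<Longrightarrow> alpha (Gs i) (r i) = block_alpha i"
  by (simp add: alpha_def block_alpha_def charpoly_block charpoly_delete_root)

lemma det_delete_root_nonzero: "i \<in> {1..n} \<Longrightarrow> det_on (verts (Gs i) - {r i}) (charmat G) \<noteq> 0"
  using simple[of i] by (intro det_on_charmat_nonzero) (simp add: simple_graph_def)

end

theorem lemma6:
  fixes n :: nat and Gs :: "nat \<Rightarrow> 'a graph" and r :: "nat \<Rightarrow> 'a"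
  assumes "n \<ge> 1"
    and "\<And>i. i \<in> {1..n} \<Longrightarrow> simple_graph (Gs i)"
    and "\<And>i. i \<in> {1..n} \<Longrightarrow> r i \<in> verts (Gs i)"
    and "\<And>i j. i \<in> {1..n} \<Longrightarrow> j \<in> {1..n} \<Longrightarrow> i \<noteq> j \<Longrightarrow>
           verts (Gs i) \<inter> verts (Gs j) = {}"
    and "\<And>i. i \<in> {1..n} \<Longrightarrow> alpha (Gs i) (r i) = alpha (Gs (n + 1 - i)) (r (n + 1 - i))"
  shows "alpha (decorated_path n Gs r) (r 1) = alpha (decorated_path n Gs r) (r n)"
proof -
  interpret decorated_path_graph n Gs r
    using assms(2-4) by unfold_locales
  have "charpoly (delete_vertex G (r 1)) = charpoly (delete_vertex G (r n))"
    unfolding charpoly_delete_vertex verts_decorated_path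
  proof (rule det_delete_end_roots_eq)
    fix i assume i: "i \<in> {1..n}"
    then have "n + 1 - i \<in> {1..n}" by auto
    with i assms(5)[OF i] show "block_alpha i = block_alpha (n + 1 - i)"
      by (simp only: alpha_eq_block_alpha)
  qed (use assms(1) det_delete_root_nonzero in auto)
  then show ?thesis by (simp add: alpha_def)
qed

end
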